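(* Let $K$ be a finite abstract simplicial complex with vertex set $V$, and let $\{U_1,\dots,U_m\}$ be a hard partition of $V$ (every vertex lies in exactly one $U_i$). Form the topological pooled complex $\mathrm{Nrv}(\mathcal{U})$ and the matrices $\mathbf{S}_{q,p}$, $\mathbf{S}_p:=\mathbf{S}_{p,p}$ of the matrix implementation, both as described in the context. Then the topological and matrix formulations produce the same pooled simplicial complex. Concretely: for every $p\ge 0$, the $p$-simplices of $\mathrm{Nrv}(\mathcal{U})$ are exactly the $p$-subsets $\tau$ of clusters that index the (nonzero) columns of $\mathbf{S}_p$; and for every $p\ge 1$ and all such $\tau_{p-1}$, $\tau_p$, the entry $\big(\mathbf{S}_{p-1}^T\,|\mathbf{B}_p|\,\mathbf{S}_p\big)[\tau_{p-1},\tau_p]$ is nonzero if and only if $\tau_{p-1}$ is a face of $\tau_p$ in $\mathrm{Nrv}(\mathcal{U})$, i.e. $\mathbf{S}_{p-1}^T|\mathbf{B}_p|\mathbf{S}_p$ has the same support as the non-oriented $p$-th boundary matrix of $\mathrm{Nrv}(\mathcal{U})$.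
   Context: A $p$-simplex is a set of $p+1$ vertices. For a vertex $v$ of $K$, its star is $St(v)=\{\sigma\in K: v\in\sigma\}$. Topological formulation: for each cluster put $\widetilde U_i=\bigcup_{v\in U_i}St(v)$ and $\mathcal{U}=\{\widetilde U_i\}_{i=1}^m$; the nerve $\mathrm{Nrv}(\mathcal{U})$ is the simplicial complex on vertex set $\{1,\dots,m\}$ (one vertex per cluster) whose simplices are the nonempty sets $\tau\subseteq\{1,\dots,m\}$ with $\bigcap_{i\in\tau}\widetilde U_i\neq\emptyset$. Matrix formulation: $|\mathbf{B}_p|$ denotes the non-oriented boundary matrix of $K$ (rows indexed by $(p-1)$-simplices, columns by $p$-simplices, entry $1$ if the row simplex is a face of the column simplex and $0$ otherwise). $\mathbf{S}_0$ is the $n_0\times m$ matrix with $\mathbf{S}_0[v,U_j]=1$ if $v\in U_j$ and $0$ otherwise. For $q>0$, $\mathbf{S}_{q,0}$ has rows indexed by $q$-simplices $\sigma$ of $K$ and columns by clusters, with $\mathbf{S}_{q,0}[\sigma,U_j]=1$ if $\mathbf{S}_0[v,U_j]=1$ for some vertex $v\in\sigma$, and $0$ otherwise. For $0<p\le q$, $\mathbf{S}_{q,p}$ has rows indexed by $q$-simplices of $K$ and a column for each set $\tau=\{U_{a_0},\dots,U_{a_p}\}$ of $p+1$ distinct clusters, given by the entrywise product $\mathbf{S}_{q,p}[\cdot,\tau]=\mathbf{S}_{q,0}[\cdot,U_{a_0}]\odot\cdots\odot\mathbf{S}_{q,0}[\cdot,U_{a_p}]$; columns that are identically zero are discarded (those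 $\tau$ are not simplices of the pooled complex). The block matrix assembled from the $\mathbf{S}_{q,p}$ ($p\le q$) may additionally be row-normalized so each row sums to $1$; this positive rescaling does not change supports. The pooled boundary matrices are $\mathbf{B}_p^{\mathrm{pooled}}=\mathbf{S}_{p-1}^T|\mathbf{B}_p|\mathbf{S}_p$. *)

theory Defs
  imports Complex_Main
begin

definition simplicial_complex :: "'a set set \<Rightarrow> bool" where
  "simplicial_complex K \<longleftrightarrow> finite K \<and>
     (\<forall>\<sigma>\<in>K. finite \<sigma> \<and> \<sigma> \<noteq> {}) \<and>
     (\<forall>\<sigma>\<in>K. \<forall>\<rho>. \<rho> \<subseteq> \<sigma> \<and> \<rho> \<noteq> {} \<longrightarrow> \<rho> \<in> K)"

definition vertices :: "'a set set \<Rightarrow> 'a set" where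
  "vertices K = \<Union>K"

definition simplices :: "'a set set \<Rightarrow> nat \<Rightarrow> 'a set set" where
  "simplices K p = {\<sigma>\<in>K. card \<sigma> = p + 1}"

definition star :: "'a set set \<Rightarrow> 'a \<Rightarrow> 'a set set" where
  "star K v = {\<sigma>\<in>K. v \<in> \<sigma>}"

definition hard_partition :: "'a set set \<Rightarrow> (nat \<Rightarrow> 'a set) \<Rightarrow> nat \<Rightarrow> bool" where
  "hard_partition K U m \<longleftrightarrow>
     (\<forall>i\<in>{1..m}. U i \<noteq> {} \<and> U i \<subseteq> vertices K) \<and>
     (\<forall>i\<in>{1..m}. \<forall>j\<in>{1..m}. i \<noteq> j \<longrightarrow> U i \<inter> U j = {}) \<and>
     (\<Union>i\<in>{1..m}. U i) = vertices K"

definition cluster_cover :: "'a set set \<Rightarrow> (nat \<Rightarrow> 'a set) \<Rightarrow> nat \<Rightarrow> 'a set set" where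
  "cluster_cover K U i = (\<Union>v\<in>U i. star K v)"

definition nerve :: "'a set set \<Rightarrow> (nat \<Rightarrow> 'a set) \<Rightarrow> nat \<Rightarrow> nat set set" where
  "nerve K U m = {\<tau>. \<tau> \<noteq> {} \<and> \<tau> \<subseteq> {1..m} \<and> (\<Inter>i\<in>\<tau>. cluster_cover K U i) \<noteq> {}}"

text \<open>Non-oriented boundary matrix |B_p| of a complex, as a function of
  (row (p-1)-simplex, column p-simplex); only meaningful on those index sets.\<close>
definition abs_boundary :: "'b set set \<Rightarrow> nat \<Rightarrow> 'b set \<Rightarrow> 'b set \<Rightarrow> real" where
  "abs_boundary K p \<rho> \<sigma> =
     (if \<rho> \<in> simplices K (p - 1) \<and> \<sigma> \<in> simplices K p \<and> \<rho> \<subseteq> \<sigma> then 1 else 0)"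

text \<open>Matrix formulation. S_0 (rows: vertices, columns: clusters).\<close>
definition S0 :: "(nat \<Rightarrow> 'a set) \<Rightarrow> 'a \<Rightarrow> nat \<Rightarrow> real" where
  "S0 U v j = (if v \<in> U j then 1 else 0)"

text \<open>S_{q,0} (rows: q-simplices, columns: clusters). For q = 0 the row {v}
  is identified with vertex v, and the formula reduces to S_0.\<close>
definition Sq0 :: "(nat \<Rightarrow> 'a set) \<Rightarrow> 'a set \<Rightarrow> nat \<Rightarrow> real" where
  "Sq0 U \<sigma> j = (if \<exists>v\<in>\<sigma>. S0 U v j = 1 then 1 else 0)"

text \<open>S_{q,p} entries: column indexed by a set tau of p+1 distinct clusters,
  entrywise product of the S_{q,0} columns of its clusters.\<close>
definition Sqp :: "(nat \<Rightarrow> 'a set) \<Rightarrow> 'a set \<Rightarrow> nat set \<Rightarrow> real" where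
  "Sqp U \<sigma> \<tau> = (\<Prod>j\<in>\<tau>. Sq0 U \<sigma> j)"

text \<open>Column index set of S_p = S_{p,p}: for p = 0 all m clusters (a cluster
  U_j is identified with the singleton {j}); for p > 0 the (p+1)-sets of
  clusters whose column is not identically zero.\<close>
definition S_columns :: "'a set set \<Rightarrow> (nat \<Rightarrow> 'a set) \<Rightarrow> nat \<Rightarrow> nat \<Rightarrow> nat set set" where
  "S_columns K U m p =
     (if p = 0 then {{j} | j. j \<in> {1..m}}
      else {\<tau>. \<tau> \<subseteq> {1..m} \<and> card \<tau> = p + 1 \<and>
                (\<exists>\<sigma>\<in>simplices K p. Sqp U \<sigma> \<tau> \<noteq> 0)})"

text \<open>Pooled boundary matrix S_{p-1}^T |B_p| S_p, entry (tau', tau).\<close>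
definition pooled_boundary ::
  "'a set set \<Rightarrow> (nat \<Rightarrow> 'a set) \<Rightarrow> nat \<Rightarrow> nat set \<Rightarrow> nat set \<Rightarrow> real" where
  "pooled_boundary K U p \<tau>' \<tau> =
     (\<Sum>\<rho>\<in>simplices K (p - 1). \<Sum>\<sigma>\<in>simplices K p.
        Sqp U \<rho> \<tau>' * abs_boundary K p \<rho> \<sigma> * Sqp U \<sigma> \<tau>)"

end

theory Submission
  imports Defs "HOL-Library.Disjoint_Sets"
begin

text \<open>Since the clusters are pairwise disjoint, a simplex meeting every cluster of \<open>\<tau>\<close>
  contains a transversal of \<open>\<tau>\<close>: one vertex per cluster, necessarily distinct. Shrinking a simplex to
  such a transversal turns ``some simplex meets the clusters of \<open>\<tau>\<close>'' (the nerve) into ``some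
  \<open>p\<close>-simplex does'' (the nonzero columns of \<open>S\<^sub>p\<close>). Conversely a \<open>p\<close>-simplex meeting the
  \<open>p + 1\<close> clusters of \<open>\<tau>\<close> is itself a transversal, so each of its vertices lies in a cluster of
  \<open>\<tau>\<close>; hence a face of it can only meet clusters of \<open>\<tau>\<close>, which is the face relation of the
  nerve. All entries of the pooled boundary matrix are sums of nonnegative terms, so it is nonzero
  exactly when one term is.\<close>

lemma disjoint_family_on_transversal:
  assumes "disjoint_family_on U \<tau>" and "\<forall>j\<in>\<tau>. \<sigma> \<inter> U j \<noteq> {}"
  obtains f where "inj_on f \<tau>" "f ` \<tau> \<subseteq> \<sigma>" "\<And>j. j \<in> \<tau> \<Longrightarrow> f j \<in> U j"
proof -
  from assms(2) obtain f where f: "\<forall>j\<in>\<tau>. f j \<in> \<sigma> \<inter> U j"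
    using bchoice[of \<tau> "\<lambda>j v. v \<in> \<sigma> \<inter> U j"] by blast
  have "inj_on f \<tau>"
    using f disjoint_family_onD[OF assms(1)] by (fastforce simp: inj_on_def)
  with f show ?thesis
    by (intro that) auto
qed

lemma subset_meeting_disjoint_family_card:
  assumes "disjoint_family_on U \<tau>" and "\<forall>j\<in>\<tau>. \<sigma> \<inter> U j \<noteq> {}"
  obtains \<rho> where "\<rho> \<subseteq> \<sigma>" "card \<rho> = card \<tau>" "\<forall>j\<in>\<tau>. \<rho> \<inter> U j \<noteq> {}"
proof -
  obtain f where "inj_on f \<tau>" "f ` \<tau> \<subseteq> \<sigma>" "\<And>j. j \<in> \<tau> \<Longrightarrow> f j \<in> U j"
    using disjoint_family_on_transversal[OF assms] by blast
  then show ?thesis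
    by (intro that[of "f ` \<tau>"]) (auto simp: card_image)
qed

lemma subset_Union_disjoint_family_if_card_eq:
  assumes "disjoint_family_on U \<tau>" and "\<forall>j\<in>\<tau>. \<sigma> \<inter> U j \<noteq> {}"
    and "finite \<sigma>" and "card \<sigma> = card \<tau>"
  shows "\<sigma> \<subseteq> (\<Union>j\<in>\<tau>. U j)"
proof -
  obtain f where f: "inj_on f \<tau>" "f ` \<tau> \<subseteq> \<sigma>" "\<And>j. j \<in> \<tau> \<Longrightarrow> f j \<in> U j"
    using disjoint_family_on_transversal[OF assms(1,2)] by blast
  have "f ` \<tau> = \<sigma>"
    using card_subset_eq[OF assms(3) f(2)] card_image[OF f(1)] assms(4) by simp
  with f(3) show ?thesis
    by blast
qed

lemma clusters_met_by_face_subset: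
  assumes "disjoint_family_on U (\<tau> \<union> \<tau>')"
    and "finite \<sigma>" and "card \<sigma> = card \<tau>" and "\<forall>j\<in>\<tau>. \<sigma> \<inter> U j \<noteq> {}"
    and "\<rho> \<subseteq> \<sigma>" and "\<forall>j\<in>\<tau>'. \<rho> \<inter> U j \<noteq> {}"
  shows "\<tau>' \<subseteq> \<tau>"
proof
  fix j assume j: "j \<in> \<tau>'"
  then obtain v where v: "v \<in> \<rho>" "v \<in> U j"
    using assms(6) by blast
  have "disjoint_family_on U \<tau>"
    using disjoint_family_on_mono[OF Un_upper1 assms(1)] .
  then have "\<sigma> \<subseteq> (\<Union>k\<in>\<tau>. U k)"
    using subset_Union_disjoint_family_if_card_eq assms(2-4) by blast
  then obtain k where k: "k \<in> \<tau>" "v \<in> U k"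
    using v(1) assms(5) by blast
  have "j = k"
    using disjoint_family_onD[OF assms(1), of j k] j k v by blast
  with k show "j \<in> \<tau>"
    by simp
qed

lemma hard_partition_disjoint_family:
  "hard_partition K U m \<Longrightarrow> disjoint_family_on U {1..m}"
  by (simp add: hard_partition_def disjoint_family_on_def)

lemma Sqp_ne_0_iff:
  "finite \<tau> \<Longrightarrow> Sqp U \<sigma> \<tau> \<noteq> 0 \<longleftrightarrow> (\<forall>j\<in>\<tau>. \<sigma> \<inter> U j \<noteq> {})"
  by (auto simp: Sqp_def Sq0_def S0_def)

lemma Sqp_nonneg: "Sqp U \<sigma> \<tau> \<ge> 0"
  by (auto simp: Sqp_def Sq0_def intro!: prod_nonneg)

lemma cluster_cover_eq: "cluster_cover K U j = {\<sigma>\<in>K. \<sigma> \<inter> U j \<noteq> {}}"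
  by (auto simp: cluster_cover_def star_def)

lemma mem_nerve_iff:
  "\<tau> \<in> nerve K U m \<longleftrightarrow>
     \<tau> \<noteq> {} \<and> \<tau> \<subseteq> {1..m} \<and> (\<exists>\<sigma>\<in>K. \<forall>j\<in>\<tau>. \<sigma> \<inter> U j \<noteq> {})"
  unfolding nerve_def cluster_cover_eq by auto

lemma simplicial_complex_subset_mem:
  "simplicial_complex K \<Longrightarrow> \<sigma> \<in> K \<Longrightarrow> \<rho> \<subseteq> \<sigma> \<Longrightarrow> \<rho> \<noteq> {} \<Longrightarrow> \<rho> \<in> K"
  unfolding simplicial_complex_def by blast

lemma simplicial_complex_finite_simplex:
  "simplicial_complex K \<Longrightarrow> \<sigma> \<in> K \<Longrightarrow> finite \<sigma>"
  unfolding simplicial_complex_def by blast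

lemma finite_simplices: "simplicial_complex K \<Longrightarrow> finite (simplices K p)"
  by (simp add: simplicial_complex_def simplices_def)

lemma face_meeting_clusters:
  assumes K: "simplicial_complex K" and H: "hard_partition K U m"
    and "\<sigma> \<in> K" and "\<tau> \<subseteq> {1..m}" and "\<tau> \<noteq> {}" and "\<forall>j\<in>\<tau>. \<sigma> \<inter> U j \<noteq> {}"
  obtains \<rho> where "\<rho> \<subseteq> \<sigma>" "\<rho> \<in> simplices K (card \<tau> - 1)" "\<forall>j\<in>\<tau>. \<rho> \<inter> U j \<noteq> {}"
proof -
  have "finite \<tau>"
    using assms(4) finite_subset by blast
  then have "card \<tau> \<ge> 1"
    using assms(5) by (simp add: Suc_le_eq card_gt_0_iff)
  have "disjoint_family_on U \<tau>"
    using disjoint_family_on_mono[OF assms(4) hard_partition_disjoint_family[OF H]] .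
  then obtain \<rho> where \<rho>: "\<rho> \<subseteq> \<sigma>" "card \<rho> = card \<tau>" "\<forall>j\<in>\<tau>. \<rho> \<inter> U j \<noteq> {}"
    using subset_meeting_disjoint_family_card assms(6) by blast
  have "\<rho> \<noteq> {}"
    using \<rho>(2) \<open>card \<tau> \<ge> 1\<close> by auto
  then have "\<rho> \<in> K"
    using simplicial_complex_subset_mem[OF K \<open>\<sigma> \<in> K\<close> \<rho>(1)] by blast
  with \<rho> \<open>card \<tau> \<ge> 1\<close> show ?thesis
    by (intro that[of \<rho>]) (auto simp: simplices_def)
qed

lemma S_columns_eq:
  assumes K: "simplicial_complex K" and H: "hard_partition K U m"
  shows "S_columns K U m p =
    {\<tau>. \<tau> \<subseteq> {1..m} \<and> card \<tau> = p + 1 \<and> (\<exists>\<sigma>\<in>simplices K p. \<forall>j\<in>\<tau>. \<sigma> \<inter> U j \<noteq> {})}"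
proof (cases "p = 0")
  case True
  have "\<exists>\<sigma>\<in>simplices K 0. \<sigma> \<inter> U j \<noteq> {}" if j: "j \<in> {1..m}" for j
  proof -
    have "U j \<noteq> {}" "U j \<subseteq> vertices K"
      using H j by (auto simp: hard_partition_def)
    then obtain v where v: "v \<in> U j" "v \<in> vertices K"
      by blast
    then obtain \<sigma> where "\<sigma> \<in> K" "v \<in> \<sigma>"
      by (auto simp: vertices_def)
    then have "{v} \<in> K"
      using simplicial_complex_subset_mem[OF K] by blast
    with v show ?thesis
      by (auto simp: simplices_def)
  qed
  with True show ?thesis
    by (auto simp: S_columns_def card_Suc_eq)
next
  case False
  then show ?thesis
    by (fastforce simp: S_columns_def Sqp_ne_0_iff card_ge_0_finite)
qed

lemma simplices_nerve_eq_S_columns: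
  assumes K: "simplicial_complex K" and H: "hard_partition K U m"
  shows "simplices (nerve K U m) p = S_columns K U m p"
proof -
  have "(\<exists>\<sigma>\<in>K. \<forall>j\<in>\<tau>. \<sigma> \<inter> U j \<noteq> {}) \<longleftrightarrow> (\<exists>\<sigma>\<in>simplices K p. \<forall>j\<in>\<tau>. \<sigma> \<inter> U j \<noteq> {})"
    if \<tau>: "\<tau> \<subseteq> {1..m}" "card \<tau> = p + 1" for \<tau>
  proof
    assume "\<exists>\<sigma>\<in>K. \<forall>j\<in>\<tau>. \<sigma> \<inter> U j \<noteq> {}"
    then obtain \<sigma> where "\<sigma> \<in> K" "\<forall>j\<in>\<tau>. \<sigma> \<inter> U j \<noteq> {}"
      by blast
    moreover have "\<tau> \<noteq> {}"
      using \<tau>(2) by auto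
    ultimately obtain \<rho> where "\<rho> \<in> simplices K (card \<tau> - 1)" "\<forall>j\<in>\<tau>. \<rho> \<inter> U j \<noteq> {}"
      using face_meeting_clusters[OF K H _ \<tau>(1)] by blast
    with \<tau>(2) show "\<exists>\<sigma>\<in>simplices K p. \<forall>j\<in>\<tau>. \<sigma> \<inter> U j \<noteq> {}"
      by auto
  qed (auto simp: simplices_def)
  then show ?thesis
    by (auto simp: S_columns_eq[OF K H] simplices_def mem_nerve_iff)
qed

lemma pooled_boundary_ne_0_iff:
  assumes K: "simplicial_complex K" and "finite \<tau>'" and "finite \<tau>"
  shows "pooled_boundary K U p \<tau>' \<tau> \<noteq> 0 \<longleftrightarrow>
    (\<exists>\<rho>\<in>simplices K (p - 1). \<exists>\<sigma>\<in>simplices K p. \<rho> \<subseteq> \<sigma> \<and>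
       (\<forall>j\<in>\<tau>'. \<rho> \<inter> U j \<noteq> {}) \<and> (\<forall>j\<in>\<tau>. \<sigma> \<inter> U j \<noteq> {}))"
proof -
  let ?t = "\<lambda>\<rho> \<sigma>. Sqp U \<rho> \<tau>' * abs_boundary K p \<rho> \<sigma> * Sqp U \<sigma> \<tau>"
  have nonneg: "0 \<le> ?t \<rho> \<sigma>" for \<rho> \<sigma>
    by (simp add: abs_boundary_def Sqp_nonneg)
  have "pooled_boundary K U p \<tau>' \<tau> \<noteq> 0 \<longleftrightarrow>
      (\<exists>\<rho>\<in>simplices K (p - 1). \<exists>\<sigma>\<in>simplices K p. ?t \<rho> \<sigma> \<noteq> 0)"
    unfolding pooled_boundary_def
    by (simp add: sum_nonneg_eq_0_iff sum_nonneg finite_simplices[OF K] nonneg)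
  also have "\<dots> \<longleftrightarrow> (\<exists>\<rho>\<in>simplices K (p - 1). \<exists>\<sigma>\<in>simplices K p. \<rho> \<subseteq> \<sigma> \<and>
       (\<forall>j\<in>\<tau>'. \<rho> \<inter> U j \<noteq> {}) \<and> (\<forall>j\<in>\<tau>. \<sigma> \<inter> U j \<noteq> {}))"
    using assms(2,3) by (intro bex_cong refl) (auto simp: abs_boundary_def Sqp_ne_0_iff)
  finally show ?thesis .
qed

lemma pooled_boundary_ne_0_iff_subset:
  assumes K: "simplicial_complex K" and H: "hard_partition K U m" and "p \<ge> 1"
    and \<tau>': "\<tau>' \<in> S_columns K U m (p - 1)" and \<tau>: "\<tau> \<in> S_columns K U m p"
  shows "pooled_boundary K U p \<tau>' \<tau> \<noteq> 0 \<longleftrightarrow> \<tau>' \<subseteq> \<tau>"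
proof -
  have \<tau>'_props: "\<tau>' \<subseteq> {1..m}" "card \<tau>' = p"
    using \<tau>' \<open>p \<ge> 1\<close> by (auto simp: S_columns_eq[OF K H])
  then have "\<tau>' \<noteq> {}"
    using \<open>p \<ge> 1\<close> by auto
  have \<tau>_props: "\<tau> \<subseteq> {1..m}" "card \<tau> = p + 1"
      "\<exists>\<sigma>\<in>simplices K p. \<forall>j\<in>\<tau>. \<sigma> \<inter> U j \<noteq> {}"
    using \<tau> by (auto simp: S_columns_eq[OF K H])
  have fin: "finite \<tau>'" "finite \<tau>"
    using \<tau>'_props(1) \<tau>_props(1) finite_subset by blast+
  have disj: "disjoint_family_on U (\<tau> \<union> \<tau>')"
    using \<tau>'_props(1) \<tau>_props(1)
    by (intro disjoint_family_on_mono[OF _ hard_partition_disjoint_family[OF H]]) simp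
  show ?thesis
  proof
    assume "pooled_boundary K U p \<tau>' \<tau> \<noteq> 0"
    then obtain \<rho> \<sigma> where \<sigma>: "\<sigma> \<in> simplices K p" "\<forall>j\<in>\<tau>. \<sigma> \<inter> U j \<noteq> {}"
        and \<rho>: "\<rho> \<subseteq> \<sigma>" "\<forall>j\<in>\<tau>'. \<rho> \<inter> U j \<noteq> {}"
      unfolding pooled_boundary_ne_0_iff[OF K fin] by blast
    have "finite \<sigma>" "card \<sigma> = card \<tau>"
      using \<sigma>(1) simplicial_complex_finite_simplex[OF K] \<tau>_props(2)
      by (auto simp: simplices_def)
    then show "\<tau>' \<subseteq> \<tau>"
      using clusters_met_by_face_subset[OF disj _ _ \<sigma>(2) \<rho>] by blast
  next
    assume "\<tau>' \<subseteq> \<tau>"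
    obtain \<sigma> where \<sigma>: "\<sigma> \<in> simplices K p" "\<forall>j\<in>\<tau>. \<sigma> \<inter> U j \<noteq> {}"
      using \<tau>_props(3) by blast
    with \<open>\<tau>' \<subseteq> \<tau>\<close> have "\<forall>j\<in>\<tau>'. \<sigma> \<inter> U j \<noteq> {}"
      by blast
    moreover have "\<sigma> \<in> K"
      using \<sigma>(1) by (simp add: simplices_def)
    ultimately obtain \<rho> where "\<rho> \<subseteq> \<sigma>" "\<rho> \<in> simplices K (card \<tau>' - 1)"
        "\<forall>j\<in>\<tau>'. \<rho> \<inter> U j \<noteq> {}"
      using face_meeting_clusters[OF K H _ \<tau>'_props(1) \<open>\<tau>' \<noteq> {}\<close>] by blast
    with \<sigma> \<tau>'_props(2) show "pooled_boundary K U p \<tau>' \<tau> \<noteq> 0"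
      unfolding pooled_boundary_ne_0_iff[OF K fin] by blast
  qed
qed

theorem theorem4p1:
  fixes K :: "'a set set" and U :: "nat \<Rightarrow> 'a set" and m :: nat
  assumes "simplicial_complex K"
    and "hard_partition K U m"
  shows "(\<forall>p. simplices (nerve K U m) p = S_columns K U m p) \<and>
         (\<forall>p\<ge>1. \<forall>\<tau>'\<in>S_columns K U m (p - 1). \<forall>\<tau>\<in>S_columns K U m p.
             (pooled_boundary K U p \<tau>' \<tau> \<noteq> 0 \<longleftrightarrow> \<tau>' \<subseteq> \<tau>) \<and>
             (pooled_boundary K U p \<tau>' \<tau> \<noteq> 0 \<longleftrightarrow>
                abs_boundary (nerve K U m) p \<tau>' \<tau> \<noteq> 0))"
proof (intro conjI allI impI ballI)
  note simplices_eq = simplices_nerve_eq_S_columns[OF assms]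
  show "simplices (nerve K U m) p = S_columns K U m p" for p
    using simplices_eq .
  fix p \<tau>' \<tau>
  assume p: "p \<ge> 1" and \<tau>': "\<tau>' \<in> S_columns K U m (p - 1)" and \<tau>: "\<tau> \<in> S_columns K U m p"
  show face_iff: "pooled_boundary K U p \<tau>' \<tau> \<noteq> 0 \<longleftrightarrow> \<tau>' \<subseteq> \<tau>"
    using pooled_boundary_ne_0_iff_subset[OF assms p \<tau>' \<tau>] .
  have "\<tau>' \<in> simplices (nerve K U m) (p - 1)" "\<tau> \<in> simplices (nerve K U m) p"
    using \<tau>' \<tau> by (simp_all add: simplices_eq)
  then show "pooled_boundary K U p \<tau>' \<tau> \<noteq> 0 \<longleftrightarrow> abs_boundary (nerve K U m) p \<tau>' \<tau> \<noteq> 0"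
    unfolding face_iff by (simp add: abs_boundary_def)
qed

end
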